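(* Let $G$ be a graph with $n$ vertices and let $\mathcal{C}=\{C_1,\dots,C_k\}$ be a min-max clique covering of $G$ that satisfies simple intersection. Then the compressed cliques graph of $G$ (constructed from $\mathcal{C}$) is isomorphic to $G$ if and only if all of the sets $C_{i,i}$ and $C_{i,j}$, $i,j\in\{1,\dots,k\}$, contain at most one vertex.
   Context: A clique covering of $G$ is a set of cliques such that every edge lies in at least one of them; $\operatorname{cc}(G)$ is the minimum size of one. A min-max clique covering is a clique covering of size $\operatorname{cc}(G)$ consisting of maximal cliques. It has simple intersection if no three distinct cliques of it have a common vertex. For distinct $i,j$ put $C_{i,j}=C_i\cap C_j$ and $C_{i,i}=C_i\setminus\bigcup_{j\ne i}C_j$. The compressed cliques graph with respect to $\mathcal{C}$ has one vertex $v_{i,j}$ for each non-empty set $C_{i,j}$ (including $i=j$), i.e. obtained by contracting each non-empty $C_{i,j}$ to a single vertex, and $v_{i,j}$, $v_{i',j'}$ are adjacent iff $\{i,j\}\cap\{i',j'\}\neq\emptyset$. *)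

theory Defs
  imports Main
begin

definition simple_graph :: "'a set \<Rightarrow> ('a \<Rightarrow> 'a \<Rightarrow> bool) \<Rightarrow> bool" where
  "simple_graph V E \<longleftrightarrow> finite V \<and> (\<forall>u v. E u v \<longrightarrow> u \<in> V \<and> v \<in> V)
     \<and> (\<forall>u v. E u v \<longrightarrow> E v u) \<and> (\<forall>u. \<not> E u u)"

definition is_clique :: "'a set \<Rightarrow> ('a \<Rightarrow> 'a \<Rightarrow> bool) \<Rightarrow> 'a set \<Rightarrow> bool" where
  "is_clique V E K \<longleftrightarrow> K \<subseteq> V \<and> (\<forall>u\<in>K. \<forall>v\<in>K. u \<noteq> v \<longrightarrow> E u v)"

definition maximal_clique :: "'a set \<Rightarrow> ('a \<Rightarrow> 'a \<Rightarrow> bool) \<Rightarrow> 'a set \<Rightarrow> bool" where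
  "maximal_clique V E K \<longleftrightarrow> is_clique V E K \<and> (\<forall>K'. is_clique V E K' \<and> K \<subseteq> K' \<longrightarrow> K' = K)"

definition clique_covering :: "'a set \<Rightarrow> ('a \<Rightarrow> 'a \<Rightarrow> bool) \<Rightarrow> 'a set set \<Rightarrow> bool" where
  "clique_covering V E \<C> \<longleftrightarrow> (\<forall>K\<in>\<C>. is_clique V E K)
     \<and> (\<forall>u v. E u v \<longrightarrow> (\<exists>K\<in>\<C>. u \<in> K \<and> v \<in> K))"

definition cc :: "'a set \<Rightarrow> ('a \<Rightarrow> 'a \<Rightarrow> bool) \<Rightarrow> nat" where
  "cc V E = (LEAST m. \<exists>\<C>. clique_covering V E \<C> \<and> finite \<C> \<and> card \<C> = m)"

definition min_max_clique_covering :: "'a set \<Rightarrow> ('a \<Rightarrow> 'a \<Rightarrow> bool) \<Rightarrow> 'a set set \<Rightarrow> bool" where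
  "min_max_clique_covering V E \<C> \<longleftrightarrow> clique_covering V E \<C> \<and> finite \<C> \<and> card \<C> = cc V E
     \<and> (\<forall>K\<in>\<C>. maximal_clique V E K)"

definition simple_intersection :: "(nat \<Rightarrow> 'a set) \<Rightarrow> nat \<Rightarrow> bool" where
  "simple_intersection C k \<longleftrightarrow> (\<forall>h\<in>{1..k}. \<forall>i\<in>{1..k}. \<forall>j\<in>{1..k}.
      h \<noteq> i \<and> h \<noteq> j \<and> i \<noteq> j \<longrightarrow> C h \<inter> C i \<inter> C j = {})"

definition Cij :: "(nat \<Rightarrow> 'a set) \<Rightarrow> nat \<Rightarrow> nat \<Rightarrow> nat \<Rightarrow> 'a set" where
  "Cij C k i j = (if i = j then C i - (\<Union>l\<in>{1..k} - {i}. C l) else C i \<inter> C j)"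

text \<open>Compressed cliques graph: G with each non-empty C_{i,j} contracted to one vertex v_{i,j}
  (represented as Inl {i,j}); vertices of G lying in no clique of the covering (isolated vertices)
  are kept unchanged (Inr v). v_{i,j}, v_{i',j'} adjacent iff they are distinct and
  {i,j} \<inter> {i',j'} \<noteq> {}.\<close>
definition compressed_vertices :: "'a set \<Rightarrow> (nat \<Rightarrow> 'a set) \<Rightarrow> nat \<Rightarrow> (nat set + 'a) set" where
  "compressed_vertices V C k =
     Inl ` {{i, j} | i j. i \<in> {1..k} \<and> j \<in> {1..k} \<and> Cij C k i j \<noteq> {}}
     \<union> Inr ` (V - (\<Union>l\<in>{1..k}. C l))"

fun compressed_edge :: "nat set + 'a \<Rightarrow> nat set + 'a \<Rightarrow> bool" where
  "compressed_edge (Inl S) (Inl T) \<longleftrightarrow> S \<noteq> T \<and> S \<inter> T \<noteq> {}"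
| "compressed_edge _ _ \<longleftrightarrow> False"

definition graph_isomorphic :: "'a set \<Rightarrow> ('a \<Rightarrow> 'a \<Rightarrow> bool) \<Rightarrow> 'b set \<Rightarrow> ('b \<Rightarrow> 'b \<Rightarrow> bool) \<Rightarrow> bool" where
  "graph_isomorphic V E W F \<longleftrightarrow>
     (\<exists>f. bij_betw f V W \<and> (\<forall>u\<in>V. \<forall>v\<in>V. E u v \<longleftrightarrow> F (f u) (f v)))"

end

theory Submission
  imports Defs
begin

text \<open>Under simple intersection every covered vertex u lies in one or two cliques, and the sets
  C_{i,j} are exactly the fibres of the map u \<mapsto> {l. u \<in> C l}. The compressed cliques graph
  is the image of G under this map, with uncovered vertices kept, so it has fewer vertices than G
  unless the map is injective, i.e. unless every C_{i,j} has at most one element. Conversely,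
  if it is injective, it is an isomorphism: two distinct vertices are adjacent iff they share a
  clique iff their (distinct) index sets meet.\<close>

definition covered_vertices :: "(nat \<Rightarrow> 'a set) \<Rightarrow> nat \<Rightarrow> 'a set" where
  "covered_vertices C k = (\<Union>l\<in>{1..k}. C l)"

definition clique_signature :: "(nat \<Rightarrow> 'a set) \<Rightarrow> nat \<Rightarrow> 'a \<Rightarrow> nat set" where
  "clique_signature C k u = {l\<in>{1..k}. u \<in> C l}"

lemma covered_vertices_subset:
  assumes "clique_covering V E (C ` {1..k})"
  shows "covered_vertices C k \<subseteq> V"
  using assms unfolding clique_covering_def is_clique_def covered_vertices_def by blast

lemma graph_isomorphic_sym:
  assumes "graph_isomorphic V E W F"
  shows "graph_isomorphic W F V E"
proof -
  obtain f where f: "bij_betw f V W" "\<forall>u\<in>V. \<forall>v\<in>V. E u v \<longleftrightarrow> F (f u) (f v)"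
    using assms unfolding graph_isomorphic_def by blast
  let ?g = "inv_into V f"
  have "bij_betw ?g W V" using f(1) by (rule bij_betw_inv_into)
  moreover have "F u v \<longleftrightarrow> E (?g u) (?g v)" if "u \<in> W" "v \<in> W" for u v
  proof -
    have "?g u \<in> V" "f (?g u) = u" "?g v \<in> V" "f (?g v) = v"
      using that f(1) by (auto simp: bij_betw_def inv_into_into f_inv_into_f)
    then show ?thesis using f(2) by metis
  qed
  ultimately show ?thesis unfolding graph_isomorphic_def by blast
qed

lemma simple_intersectionD:
  assumes "simple_intersection C k" "h \<in> {1..k}" "i \<in> {1..k}" "j \<in> {1..k}"
    and "h \<noteq> i" "h \<noteq> j" "i \<noteq> j"
  shows "C h \<inter> C i \<inter> C j = {}"
  using assms unfolding simple_intersection_def by blast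

lemma clique_signature_subset_pair:
  assumes "simple_intersection C k" "i \<in> {1..k}" "j \<in> {1..k}" "i \<noteq> j"
    and "u \<in> C i" "u \<in> C j"
  shows "clique_signature C k u \<subseteq> {i, j}"
  using simple_intersectionD[OF assms(1) _ assms(2,3) _ _ assms(4)] assms(5,6)
  unfolding clique_signature_def by blast

lemma clique_signature_pair:
  assumes "simple_intersection C k" "u \<in> covered_vertices C k"
  obtains i j where "i \<in> {1..k}" "j \<in> {1..k}" "clique_signature C k u = {i, j}"
proof -
  obtain i where i: "i \<in> {1..k}" "u \<in> C i"
    using assms(2) unfolding covered_vertices_def by blast
  show ?thesis
  proof (cases "clique_signature C k u = {i}")
    case True
    then show ?thesis using that i(1) by (metis insert_absorb2)
  next
    case False
    then obtain j where j: "j \<in> {1..k}" "u \<in> C j" "j \<noteq> i"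
      using i unfolding clique_signature_def by blast
    have "clique_signature C k u = {i, j}"
      using clique_signature_subset_pair[OF assms(1) i(1) j(1) j(3)[symmetric] i(2) j(2)] i j
      unfolding clique_signature_def by blast
    then show ?thesis using that i(1) j(1) by blast
  qed
qed

lemma Cij_eq_signature_fibre:
  assumes "simple_intersection C k" "i \<in> {1..k}" "j \<in> {1..k}"
  shows "Cij C k i j = {u \<in> covered_vertices C k. clique_signature C k u = {i, j}}"
proof -
  have "u \<in> Cij C k i j \<longleftrightarrow> clique_signature C k u = {i, j}" for u
  proof (cases "i = j")
    case True
    have "u \<in> C i - (\<Union>l\<in>{1..k} - {i}. C l) \<longleftrightarrow> clique_signature C k u = {i}"
      using assms(2) unfolding clique_signature_def by blast
    then show ?thesis unfolding Cij_def if_P[OF True] True by simp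
  next
    case False
    have "u \<in> C i \<inter> C j \<Longrightarrow> clique_signature C k u = {i, j}"
      using clique_signature_subset_pair[OF assms False] assms(2,3)
      unfolding clique_signature_def by blast
    moreover have "clique_signature C k u = {i, j} \<Longrightarrow> u \<in> C i \<inter> C j"
      unfolding clique_signature_def by blast
    ultimately show ?thesis unfolding Cij_def if_not_P[OF False] by blast
  qed
  moreover have "clique_signature C k u = {i, j} \<Longrightarrow> u \<in> covered_vertices C k" for u
    unfolding clique_signature_def covered_vertices_def by blast
  ultimately show ?thesis by blast
qed

lemma compressed_vertices_eq_signatures:
  assumes "simple_intersection C k"
  shows "compressed_vertices V C k =
    Inl ` clique_signature C k ` covered_vertices C k \<union> Inr ` (V - covered_vertices C k)"
proof -
  have "{{i, j} | i j. i \<in> {1..k} \<and> j \<in> {1..k} \<and> Cij C k i j \<noteq> {}}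
      = clique_signature C k ` covered_vertices C k"
  proof
    show "{{i, j} | i j. i \<in> {1..k} \<and> j \<in> {1..k} \<and> Cij C k i j \<noteq> {}}
        \<subseteq> clique_signature C k ` covered_vertices C k"
      using Cij_eq_signature_fibre[OF assms] by fastforce
    show "clique_signature C k ` covered_vertices C k
        \<subseteq> {{i, j} | i j. i \<in> {1..k} \<and> j \<in> {1..k} \<and> Cij C k i j \<noteq> {}}"
    proof
      fix s assume "s \<in> clique_signature C k ` covered_vertices C k"
      then obtain u where u: "u \<in> covered_vertices C k" "s = clique_signature C k u" by blast
      then obtain i j where "i \<in> {1..k}" "j \<in> {1..k}" "clique_signature C k u = {i, j}"
        using clique_signature_pair[OF assms] by blast
      moreover from this have "u \<in> Cij C k i j" using Cij_eq_signature_fibre[OF assms] u(1) by auto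
      ultimately show "s \<in> {{i, j} | i j. i \<in> {1..k} \<and> j \<in> {1..k} \<and> Cij C k i j \<noteq> {}}"
        using u(2) by blast
    qed
  qed
  then show ?thesis unfolding compressed_vertices_def covered_vertices_def by simp
qed

lemma card_Cij_le_1_iff_inj_signature:
  assumes "simple_intersection C k" "finite (covered_vertices C k)"
  shows "(\<forall>i\<in>{1..k}. \<forall>j\<in>{1..k}. card (Cij C k i j) \<le> 1)
    \<longleftrightarrow> inj_on (clique_signature C k) (covered_vertices C k)"
proof -
  have fibre: "card (Cij C k i j) \<le> 1 \<longleftrightarrow> (\<forall>u\<in>covered_vertices C k. \<forall>v\<in>covered_vertices C k.
      clique_signature C k u = {i, j} \<longrightarrow> clique_signature C k v = {i, j} \<longrightarrow> u = v)"
    if "i \<in> {1..k}" "j \<in> {1..k}" for i j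
    using Cij_eq_signature_fibre[OF assms(1) that] assms(2) by (auto simp: card_le_Suc0_iff_eq)
  show ?thesis
  proof
    assume small: "\<forall>i\<in>{1..k}. \<forall>j\<in>{1..k}. card (Cij C k i j) \<le> 1"
    show "inj_on (clique_signature C k) (covered_vertices C k)"
    proof (rule inj_onI)
      fix u v assume u: "u \<in> covered_vertices C k" and v: "v \<in> covered_vertices C k"
        and eq: "clique_signature C k u = clique_signature C k v"
      obtain i j where "i \<in> {1..k}" "j \<in> {1..k}" "clique_signature C k u = {i, j}"
        using clique_signature_pair[OF assms(1) u] .
      then show "u = v" using fibre small u v eq by simp
    qed
  next
    assume "inj_on (clique_signature C k) (covered_vertices C k)"
    then show "\<forall>i\<in>{1..k}. \<forall>j\<in>{1..k}. card (Cij C k i j) \<le> 1"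
      using fibre by (simp add: inj_on_def)
  qed
qed

lemma card_compressed_vertices:
  assumes "simple_intersection C k" "finite V" "covered_vertices C k \<subseteq> V"
  shows "card (compressed_vertices V C k)
    = card (clique_signature C k ` covered_vertices C k) + card (V - covered_vertices C k)"
proof -
  have "finite (covered_vertices C k)" using assms(2,3) finite_subset by blast
  then show ?thesis
    unfolding compressed_vertices_eq_signatures[OF assms(1)] using assms(2)
    by (subst card_Un_disjoint) (auto simp: card_image)
qed

lemma inj_signature_if_isomorphic:
  assumes "simple_intersection C k" "finite V" "covered_vertices C k \<subseteq> V"
    and "graph_isomorphic (compressed_vertices V C k) F V E"
  shows "inj_on (clique_signature C k) (covered_vertices C k)"
proof -
  have fin: "finite (covered_vertices C k)" using assms(2,3) finite_subset by blast
  have "card (compressed_vertices V C k) = card V"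
    using assms(4) bij_betw_same_card unfolding graph_isomorphic_def by blast
  moreover have "card V = card (covered_vertices C k) + card (V - covered_vertices C k)"
    using assms(2,3) fin by (simp add: card_Diff_subset card_mono)
  ultimately have "card (clique_signature C k ` covered_vertices C k) = card (covered_vertices C k)"
    using card_compressed_vertices[OF assms(1-3)] by simp
  then show ?thesis using fin by (simp add: inj_on_iff_eq_card)
qed

lemma isomorphic_compressed_if_inj_signature:
  assumes "simple_graph V E" "clique_covering V E (C ` {1..k})" "simple_intersection C k"
    and inj: "inj_on (clique_signature C k) (covered_vertices C k)"
  shows "graph_isomorphic V E (compressed_vertices V C k) compressed_edge"
proof -
  let ?U = "covered_vertices C k" and ?P = "clique_signature C k"
  define f where "f u = (if u \<in> ?U then Inl (?P u) else Inr u)" for u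
  have UV: "?U \<subseteq> V" using covered_vertices_subset[OF assms(2)] .
  have "inj_on f V"
    by (rule inj_onI) (auto simp: f_def split: if_splits dest: inj_onD[OF inj])
  moreover have "f ` V = Inl ` ?P ` ?U \<union> Inr ` (V - ?U)"
  proof -
    have "f ` V = f ` ?U \<union> f ` (V - ?U)" using UV by blast
    also have "f ` ?U = Inl ` ?P ` ?U" by (simp add: f_def image_image)
    also have "f ` (V - ?U) = Inr ` (V - ?U)" by (simp add: f_def)
    finally show ?thesis .
  qed
  ultimately have bij: "bij_betw f V (compressed_vertices V C k)"
    unfolding bij_betw_def compressed_vertices_eq_signatures[OF assms(3)] by blast
  have share_if_adj: "u \<noteq> v \<and> (\<exists>l\<in>{1..k}. u \<in> C l \<and> v \<in> C l)" if "E u v" for u v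
  proof -
    have "\<not> E u u" using assms(1) unfolding simple_graph_def by (elim conjE) simp
    then show ?thesis using assms(2) that unfolding clique_covering_def by blast
  qed
  have adj_if_share: "E u v" if "u \<noteq> v" "l \<in> {1..k}" "u \<in> C l" "v \<in> C l" for u v l
    using assms(2) that unfolding clique_covering_def is_clique_def by blast
  have "E u v \<longleftrightarrow> compressed_edge (f u) (f v)" if "u \<in> V" "v \<in> V" for u v
  proof (cases "u \<in> ?U \<and> v \<in> ?U")
    case True
    have "u \<noteq> v \<longleftrightarrow> ?P u \<noteq> ?P v" using inj True by (auto dest: inj_onD)
    moreover have "(\<exists>l\<in>{1..k}. u \<in> C l \<and> v \<in> C l) \<longleftrightarrow> ?P u \<inter> ?P v \<noteq> {}"
      unfolding clique_signature_def by blast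
    ultimately have "E u v \<longleftrightarrow> ?P u \<noteq> ?P v \<and> ?P u \<inter> ?P v \<noteq> {}"
      using share_if_adj adj_if_share by blast
    then show ?thesis using True unfolding f_def by simp
  next
    case False
    then have "\<not> E u v" using share_if_adj unfolding covered_vertices_def by blast
    moreover have "\<not> compressed_edge (f u) (f v)" using False unfolding f_def by auto
    ultimately show ?thesis by simp
  qed
  then show ?thesis using bij unfolding graph_isomorphic_def by blast
qed

theorem mainTheorem2:
  fixes V :: "'a set" and E :: "'a \<Rightarrow> 'a \<Rightarrow> bool" and C :: "nat \<Rightarrow> 'a set" and k :: nat
  assumes "simple_graph V E"
    and "inj_on C {1..k}"
    and "min_max_clique_covering V E (C ` {1..k})"
    and "simple_intersection C k"
  shows "graph_isomorphic (compressed_vertices V C k) compressed_edge V E \<longleftrightarrow>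
         (\<forall>i\<in>{1..k}. \<forall>j\<in>{1..k}. card (Cij C k i j) \<le> 1)"
proof -
  have cov: "clique_covering V E (C ` {1..k})"
    using assms(3) unfolding min_max_clique_covering_def by (rule conjunct1)
  have finV: "finite V" using assms(1) unfolding simple_graph_def by (rule conjunct1)
  have UV: "covered_vertices C k \<subseteq> V" using covered_vertices_subset[OF cov] .
  have finU: "finite (covered_vertices C k)" using finV UV finite_subset by blast
  show ?thesis
    unfolding card_Cij_le_1_iff_inj_signature[OF assms(4) finU]
  proof
    assume "graph_isomorphic (compressed_vertices V C k) compressed_edge V E"
    then show "inj_on (clique_signature C k) (covered_vertices C k)"
      by (rule inj_signature_if_isomorphic[OF assms(4) finV UV])
  next
    assume "inj_on (clique_signature C k) (covered_vertices C k)"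
    then show "graph_isomorphic (compressed_vertices V C k) compressed_edge V E"
      by (rule graph_isomorphic_sym[OF isomorphic_compressed_if_inj_signature[OF assms(1) cov assms(4)]])
  qed
qed

end
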